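(* Let $G=(U\cup W,E)$ be a finite bipartite graph with bipartition $(U,W)$. For every $\mathbf{I}\in\{0,1\}^{\vec E}$ with $\mathbf{I}=\mathcal{P}_G(\mathcal{P}_G(\mathbf{I}))$, the set $V(\mathbf{I})$ is a vertex cover of $G$.
   Context: $\vec E$: directed edges; $\partial v$: neighbours of $v$; empty sums are $0$. $\mathcal{P}_G:\{0,1\}^{\vec E}\to\{0,1\}^{\vec E}$, $\mathcal{P}_G(\mathbf{I})_{u\to v}=\mathbf{1}(\sum_{w\in\partial u\setminus v}I_{w\to u}=0)$. $V(\mathbf{I})$: for $u\in U$, $u\in V(\mathbf{I})$ iff $\sum_{v\in\partial u}I_{v\to u}\ge1$; for $w\in W$, $w\in V(\mathbf{I})$ iff $\sum_{v\in\partial w}\mathcal{P}_G(\mathbf{I})_{v\to w}\ge2$. *)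

theory Defs
  imports Main
begin

text \<open>An undirected edge {u,v}
  corresponds to the two directed edges (u,v) and (v,u).\<close>

definition bipartite_graph :: "'a set \<Rightarrow> 'a set \<Rightarrow> ('a \<times> 'a) set \<Rightarrow> bool" where
  "bipartite_graph U W E \<longleftrightarrow> finite U \<and> finite W \<and> U \<inter> W = {} \<and>
     E \<subseteq> (U \<times> W) \<union> (W \<times> U) \<and> sym E"

definition nbrs :: "('a \<times> 'a) set \<Rightarrow> 'a \<Rightarrow> 'a set" where
  "nbrs E v = {w. (w, v) \<in> E}"

text \<open>Messages I in {0,1}^(directed edges) are functions 'a \<times> 'a \<Rightarrow> nat; the value
  at (u,v) is I_{u\<rightarrow>v}.  Only values on E matter.\<close>
definition PG :: "('a \<times> 'a) set \<Rightarrow> ('a \<times> 'a \<Rightarrow> nat) \<Rightarrow> ('a \<times> 'a \<Rightarrow> nat)" where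
  "PG E I = (\<lambda>(u, v). if (\<Sum>w \<in> nbrs E u - {v}. I (w, u)) = 0 then 1 else 0)"

definition Vset :: "'a set \<Rightarrow> 'a set \<Rightarrow> ('a \<times> 'a) set \<Rightarrow> ('a \<times> 'a \<Rightarrow> nat) \<Rightarrow> 'a set" where
  "Vset U W E I =
     {u \<in> U. (\<Sum>v \<in> nbrs E u. I (v, u)) \<ge> 1} \<union>
     {w \<in> W. (\<Sum>v \<in> nbrs E w. PG E I (v, w)) \<ge> 2}"

definition vertex_cover :: "('a \<times> 'a) set \<Rightarrow> 'a set \<Rightarrow> bool" where
  "vertex_cover E C \<longleftrightarrow> (\<forall>(u, v) \<in> E. u \<in> C \<or> v \<in> C)"

end

theory Submission
  imports Defs
begin

text \<open>Let (u,w) be an edge with u \<in> U not in V(I), so every message into u vanishes.  Then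
  u sends 1 to w, and the fixed-point equation at the edge w \<rightarrow> u forces some other
  neighbour x of w to send 1 to w as well: since I(w\<rightarrow>u) = 0, the message that
  P_G(P_G(I)) puts on w \<rightarrow> u must be 0, i.e. w hears a 1 from a neighbour other than u.
  Hence w receives at least two 1s under P_G(I) and lies in V(I).\<close>

lemma PG_le_1: "PG E I e \<le> 1"
  by (cases e) (simp add: PG_def)

lemma PG_eq_1I:
  assumes "\<forall>w \<in> nbrs E u - {v}. I (w, u) = 0"
  shows "PG E I (u, v) = 1"
  using assms by (simp add: PG_def)

lemma PG_eq_0D:
  assumes "PG E I (u, v) = 0"
  obtains w where "w \<in> nbrs E u - {v}" "I (w, u) \<noteq> 0"
  using assms sum.not_neutral_contains_not_neutral
  by (fastforce simp: PG_def split: if_splits)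

lemma bipartite_nbrs_subset:
  assumes "bipartite_graph U W E"
  shows "u \<in> U \<Longrightarrow> nbrs E u \<subseteq> W" and "w \<in> W \<Longrightarrow> nbrs E w \<subseteq> U"
  using assms by (auto simp: bipartite_graph_def nbrs_def)

lemma bipartite_finite_nbrs:
  assumes "bipartite_graph U W E" and "v \<in> U \<union> W"
  shows "finite (nbrs E v)"
proof -
  have "finite U" "finite W"
    using assms(1) by (auto simp: bipartite_graph_def)
  with assms bipartite_nbrs_subset show ?thesis
    by (meson Un_iff finite_subset)
qed

lemma not_in_Vset_silent:
  assumes "bipartite_graph U W E" and "u \<in> U" and "u \<notin> Vset U W E I"
    and "v \<in> nbrs E u"
  shows "I (v, u) = 0"
proof -
  have "(\<Sum>v \<in> nbrs E u. I (v, u)) = 0"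
    using assms(2,3) by (simp add: Vset_def)
  with bipartite_finite_nbrs[OF assms(1)] assms(2,4) show ?thesis
    by simp
qed

lemma in_Vset_two_ones:
  assumes "bipartite_graph U W E" and "w \<in> W"
    and "u \<in> nbrs E w" and "x \<in> nbrs E w" and "x \<noteq> u"
    and "PG E I (u, w) = 1" and "PG E I (x, w) = 1"
  shows "w \<in> Vset U W E I"
proof -
  have "2 = (\<Sum>v \<in> {u, x}. PG E I (v, w))"
    using assms(5-7) by simp
  also have "\<dots> \<le> (\<Sum>v \<in> nbrs E w. PG E I (v, w))"
    using bipartite_finite_nbrs[OF assms(1)] assms(2-4) by (intro sum_mono2) auto
  finally show ?thesis
    using assms(2) by (simp add: Vset_def)
qed

lemma fixed_point_covers_edge:
  assumes bg: "bipartite_graph U W E"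
    and fp: "\<forall>e \<in> E. I e = PG E (PG E I) e"
    and uw: "(u, w) \<in> E" and "u \<in> U" and "w \<in> W"
    and u_out: "u \<notin> Vset U W E I"
  shows "w \<in> Vset U W E I"
proof -
  have wu: "(w, u) \<in> E"
    using bg uw by (auto simp: bipartite_graph_def dest: symD)
  have silent: "\<forall>v \<in> nbrs E u. I (v, u) = 0"
    using not_in_Vset_silent[OF bg \<open>u \<in> U\<close> u_out] by blast
  then have "PG E (PG E I) (w, u) = 0"
    using fp wu by (auto simp: nbrs_def)
  then obtain x where x: "x \<in> nbrs E w - {u}" "PG E I (x, w) \<noteq> 0"
    by (rule PG_eq_0D)
  have "PG E I (x, w) = 1"
    using x(2) PG_le_1[of E I "(x, w)"] by linarith
  moreover have "PG E I (u, w) = 1"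
    using silent by (intro PG_eq_1I) blast
  moreover have "u \<in> nbrs E w"
    using uw by (simp add: nbrs_def)
  ultimately show ?thesis
    using in_Vset_two_ones[OF bg \<open>w \<in> W\<close>] x(1) by blast
qed

theorem mainTheorem16:
  fixes U W :: "'a set" and E :: "('a \<times> 'a) set" and I :: "'a \<times> 'a \<Rightarrow> nat"
  assumes "bipartite_graph U W E"
    and "\<forall>e \<in> E. I e \<in> {0, 1}"
    and "\<forall>e \<in> E. I e = PG E (PG E I) e"
  shows "vertex_cover E (Vset U W E I)"
  unfolding vertex_cover_def
proof (intro ballI, clarify)
  fix a b
  assume ab: "(a, b) \<in> E" and b_out: "b \<notin> Vset U W E I"
  have ba: "(b, a) \<in> E" and "a \<in> U \<and> b \<in> W \<or> b \<in> U \<and> a \<in> W"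
    using assms(1) ab by (auto simp: bipartite_graph_def dest: symD)
  then show "a \<in> Vset U W E I"
    using fixed_point_covers_edge[OF assms(1,3) ab] fixed_point_covers_edge[OF assms(1,3) ba]
      b_out by blast
qed

end
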